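(* Let $m$ be a positive integer and let $h_c, h_r$ be independent random variables such that each of $|h_c|^2$ and $|h_r|^2$ has density $f(x)=\frac{m^m}{\Gamma(m)}x^{m-1}e^{-mx}$, $x>0$. Let $P_c,P_r,P_{BS},C_c,C_r,d_c,d_r,\alpha_c,\alpha_r,\beta_{semi},B,\sigma_\tau^2,\sigma^2,\gamma_{th}$ be positive constants and $\gamma^2=(2\pi)^2/12$. Put $\bar I = P_{BS}C_r d_r^{-\alpha_r}\gamma^2\beta_{semi}^2B^2\sigma_\tau^2$ and $$\gamma_c^I=\frac{P_c C_c d_c^{-\alpha_c}|h_c|^2}{P_r C_c d_r^{-\alpha_c}|h_r|^2+\bar I+\sigma^2}.$$ Define $a_1=\frac{P_{BS}C_r d_r^{-\alpha_r}\gamma^2\beta_{semi}^2B^2\sigma_\tau^2}{C_c d_c^{-\alpha_c}}$, $a_2=\frac{\sigma^2}{C_c d_c^{-\alpha_c}}$, $a_3=\frac{d_r^{-\alpha_c}}{d_c^{-\alpha_c}}$. Then $$\Pr\{\gamma_c^I<\gamma_{th}\} = 1-\exp\!\Big(-\frac{m\gamma_{th}}{P_c}(a_1+a_2)\Big)\sum_{p=0}^{m-1}\sum_{r=0}^{p}\frac{m^r\gamma_{th}^p\binom{p}{r}(P_ra_3)^{p-r}}{(m-1)!\,p!}\cdot\frac{(a_1+a_2)^r}{P_c^p}\,\Gamma(m+p-r)\Big(\frac{\gamma_{th}a_3P_r}{P_c}+1\Big)^{-(m+p-r)}.$$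
   Context: Setting: uplink NOMA-assisted semi-integrated sensing and communication. A base station (BS) receives, from a communication transmitter at distance $d_c$ with transmit power $P_c$, and from a radar target at distance $d_r$ with uplink transmit power $P_r$, communication signals through path loss $C_c d^{-\alpha_c}$ and small-scale power gains $|h_c|^2,|h_r|^2$ (Nakagami-$m$ with unit mean, independent); the radar echo interference (BS power $P_{BS}$, echo path loss $C_r d_r^{-\alpha_r}$, fraction $\beta_{semi}\in[0,1]$ of bandwidth $B$ used for sensing, time-delay variance $\sigma_\tau^2$) is replaced by its mean $\bar I$. $\sigma^2$ is the noise power and $\gamma_{th}$ the decoding threshold; $\gamma_c^I$ is the SINR of the communication transmitter, and $\Pr\{\gamma_c^I<\gamma_{th}\}$ is its outage probability. $\Gamma(\cdot)$ is the Gamma function and $\binom{p}{r}=p!/(r!(p-r)!)$. *)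

theory Defs
  imports "HOL-Probability.Probability"
begin

text \<open>Density of the power gain |h|^2 of a unit-mean Nakagami-m fading coefficient
  (Gamma distribution with shape m and rate m), zero for x \<le> 0.\<close>
definition nakagami_power_pdf :: "nat \<Rightarrow> real \<Rightarrow> real" where
  "nakagami_power_pdf m x =
     (if x > 0 then real m ^ m / Gamma (real m) * x ^ (m - 1) * exp (- real m * x) else 0)"

definition gamma_sq :: real where
  "gamma_sq = (2 * pi)\<^sup>2 / 12"

definition I_bar :: "real \<Rightarrow> real \<Rightarrow> real \<Rightarrow> real \<Rightarrow> real \<Rightarrow> real \<Rightarrow> real \<Rightarrow> real" where
  "I_bar P_BS C_r d_r alpha_r beta_semi B sigma_tau_sq =
     P_BS * C_r * d_r powr (- alpha_r) * gamma_sq * beta_semi\<^sup>2 * B\<^sup>2 * sigma_tau_sq"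

end

theory Submission
  imports Defs
begin

(* Both power gains are Erlang distributed with shape m and rate m. Outside the null set where
   |h_r|^2 < 0, the SINR exceeds the threshold exactly when |h_c|^2 >= a + b |h_r|^2 for suitable
   a, b >= 0. Integrating over |h_r|^2 (Fubini for independent variables), the conditional
   probability is the Erlang tail sum of exp (-m t) (m t)^n / n! over n < m at t = a + b |h_r|^2.
   Expanding (a + b y)^n binomially and absorbing exp (-m b y) into the Erlang density of y, which
   changes its rate from m to m (1 + b), turns every term into an Erlang moment. *)

lemma erlang_density_mult_exp:
  assumes "l + c \<noteq> 0"
  shows "erlang_density k l y * exp (- c * y) = (l / (l + c)) ^ Suc k * erlang_density k (l + c) y"
proof (cases "y < 0")
  case False
  have "exp (- l * y) * exp (- c * y) = exp (- (l + c) * y)"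
    by (simp add: exp_add[symmetric] algebra_simps)
  moreover have "(l / (l + c)) ^ Suc k * (l + c) ^ Suc k = l ^ Suc k"
    using assms by (simp add: power_divide del: power_Suc)
  ultimately show ?thesis
    using False assms unfolding erlang_density_def by (simp add: field_simps del: power_Suc)
qed (simp add: erlang_density_def)

lemma has_bochner_integral_erlang_ith_moment_lborel:
  assumes "0 < l"
  shows "has_bochner_integral lborel (\<lambda>y. erlang_density k l y * y ^ i)
           (fact (k + i) / (fact k * l ^ i))"
proof (rule has_bochner_integral_nn_integral)
  show "AE y in lborel. 0 \<le> erlang_density k l y * y ^ i"
    using assms by (intro AE_I2) (simp add: erlang_density_def)
  show "(\<integral>\<^sup>+ y. ennreal (erlang_density k l y * y ^ i) \<partial>lborel)
          = ennreal (fact (k + i) / (fact k * l ^ i))"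
    using nn_integral_erlang_ith_moment[OF assms] by (simp add: ennreal_mult' ennreal_power)
qed (use assms in auto)

lemma has_bochner_integral_erlang_exp_moment:
  assumes l: "0 < l" and b: "0 < 1 + b"
  shows "has_bochner_integral lborel (\<lambda>y. erlang_density k l y * exp (- l * b * y) * (l * y) ^ i)
           (fact (k + i) / (fact k * (1 + b) ^ (Suc k + i)))"
proof -
  have lb: "l + l * b = l * (1 + b)"
    by (simp add: algebra_simps)
  have lb_pos: "0 < l * (1 + b)"
    using l b by simp
  have integrand: "erlang_density k l y * exp (- l * b * y) * (l * y) ^ i
          = (1 / (1 + b)) ^ Suc k * l ^ i * (erlang_density k (l * (1 + b)) y * y ^ i)" for y
    using erlang_density_mult_exp[of l "l * b" k y] l b
    by (simp add: lb power_mult_distrib del: power_Suc)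
  have moment_eq: "(1 / q) ^ Suc k * l ^ i * (fact (k + i) / (fact k * (l * q) ^ i))
                   = fact (k + i) / (fact k * q ^ (Suc k + i))" if "0 < q" for q
    using l that unfolding power_add by (simp add: field_simps del: power_Suc)
  show ?thesis
    using has_bochner_integral_mult_right[where c = "(1 / (1 + b)) ^ Suc k * l ^ i",
            OF has_bochner_integral_erlang_ith_moment_lborel[OF lb_pos, where k = k and i = i]]
    unfolding integrand moment_eq[OF b] .
qed

lemma has_bochner_integral_erlang_exp_affine_power:
  assumes "0 < l" "0 < 1 + b"
  shows "has_bochner_integral lborel
           (\<lambda>y. erlang_density k l y * (exp (- l * (a + b * y)) * (l * (a + b * y)) ^ n))
           (\<Sum>r\<le>n. exp (- l * a) * real (n choose r) * (l * a) ^ r * b ^ (n - r) *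
              (fact (k + (n - r)) / (fact k * (1 + b) ^ (Suc k + (n - r)))))"
proof -
  have "erlang_density k l y * (exp (- l * (a + b * y)) * (l * (a + b * y)) ^ n)
      = (\<Sum>r\<le>n. exp (- l * a) * real (n choose r) * (l * a) ^ r * b ^ (n - r) *
           (erlang_density k l y * exp (- l * b * y) * (l * y) ^ (n - r)))" for y
  proof -
    have "exp (- l * (a + b * y)) = exp (- l * a) * exp (- l * b * y)"
      by (simp add: exp_add[symmetric] algebra_simps)
    moreover have "(l * (a + b * y)) ^ n
        = (\<Sum>r\<le>n. real (n choose r) * (l * a) ^ r * (b * (l * y)) ^ (n - r))"
      using binomial_ring[of "l * a" "b * (l * y)" n] by (simp add: algebra_simps)
    ultimately show ?thesis
      by (simp add: sum_distrib_left sum_distrib_right power_mult_distrib ac_simps)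
  qed
  then show ?thesis
    using assms
    by (simp only:) (intro has_bochner_integral_sum has_bochner_integral_mult_right
          has_bochner_integral_erlang_exp_moment)
qed

lemma borel_measurable_erlang_CDF[measurable]: "erlang_CDF k l \<in> borel_measurable borel"
  unfolding erlang_CDF_def[abs_def] by measurable

lemma erlang_CDF_le_1: "0 \<le> l \<Longrightarrow> erlang_CDF k l t \<le> 1"
  by (simp add: erlang_CDF_def sum_nonneg)

lemma emeasure_erlang_density_atLeast:
  assumes "0 < l"
  shows "emeasure (density lborel (erlang_density k l)) {t..} = ennreal (1 - erlang_CDF k l t)"
proof -
  let ?D = "density lborel (erlang_density k l)"
  interpret prob_space ?D
    using assms by (rule prob_space_erlang_density)
  have "emeasure ?D {t..} = emeasure ?D (space ?D - {..t})"
  proof (rule emeasure_eq_AE)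
    have "AE x in ?D. x \<noteq> t"
      using AE_lborel_singleton[of t] by (subst AE_density) (auto elim!: eventually_mono)
    then show "AE x in ?D. x \<in> {t..} \<longleftrightarrow> x \<in> space ?D - {..t}"
      by eventually_elim auto
  qed auto
  also have "\<dots> = emeasure ?D (space ?D) - emeasure ?D {..t}"
    by (rule emeasure_compl) auto
  also have "\<dots> = ennreal (1 - erlang_CDF k l t)"
    using assms emeasure_space_1 by (simp add: emeasure_erlang_density ennreal_minus flip: ennreal_1)
  finally show ?thesis .
qed

lemma has_bochner_integral_erlang_tail_affine:
  assumes l: "0 < l" and "0 \<le> a" "0 \<le> b"
  shows "has_bochner_integral (density lborel (erlang_density k l))
           (\<lambda>y. 1 - erlang_CDF k l (a + b * y))
           (exp (- l * a) * (\<Sum>n\<le>k. \<Sum>r\<le>n. real (n choose r) * (l * a) ^ r * b ^ (n - r) *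
              fact (k + (n - r)) / (fact n * fact k * (1 + b) ^ (Suc k + (n - r)))))"
proof -
  have "erlang_density k l y * (1 - erlang_CDF k l (a + b * y))
      = (\<Sum>n\<le>k. 1 / fact n *
           (erlang_density k l y * (exp (- l * (a + b * y)) * (l * (a + b * y)) ^ n)))" for y
  proof (cases "y < 0")
    case False
    then have "0 \<le> a + b * y"
      using assms by simp
    then show ?thesis
      by (simp add: erlang_CDF_def sum_distrib_left ac_simps)
  qed (simp add: erlang_density_def)
  moreover have "1 + b > 0"
    using assms by simp
  ultimately have "has_bochner_integral lborel
      (\<lambda>y. erlang_density k l y * (1 - erlang_CDF k l (a + b * y)))
      (\<Sum>n\<le>k. 1 / fact n * (\<Sum>r\<le>n. exp (- l * a) * real (n choose r) * (l * a) ^ r * b ^ (n - r) *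
         (fact (k + (n - r)) / (fact k * (1 + b) ^ (Suc k + (n - r))))))"
    using l by (simp only:) (intro has_bochner_integral_sum has_bochner_integral_mult_right
          has_bochner_integral_erlang_exp_affine_power)
  then show ?thesis
    using l by (intro has_bochner_integral_density) (auto simp: sum_distrib_left ac_simps)
qed

lemma (in prob_space) emeasure_indep_var_pair:
  assumes indep: "indep_var S X T Y"
    and A: "{z \<in> space (S \<Otimes>\<^sub>M T). P (fst z) (snd z)} \<in> sets (S \<Otimes>\<^sub>M T)"
  shows "emeasure M {w \<in> space M. P (X w) (Y w)}
           = (\<integral>\<^sup>+y. emeasure (distr M S X) {x \<in> space S. P x y} \<partial>distr M T Y)"
proof -
  let ?A = "{z \<in> space (S \<Otimes>\<^sub>M T). P (fst z) (snd z)}"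
  have X: "random_variable S X" and Y: "random_variable T Y"
    using indep by (rule indep_var_rv1, rule indep_var_rv2)
  have XY: "pair_sigma_finite (distr M S X) (distr M T Y)"
    unfolding pair_sigma_finite_def
    using prob_space_distr[OF X] prob_space_distr[OF Y] by (simp add: prob_space_imp_sigma_finite)
  have "{w \<in> space M. P (X w) (Y w)} = (\<lambda>w. (X w, Y w)) -` ?A \<inter> space M"
    using measurable_space[OF measurable_Pair[OF X Y]] by auto
  then have "emeasure M {w \<in> space M. P (X w) (Y w)}
      = emeasure (distr M (S \<Otimes>\<^sub>M T) (\<lambda>w. (X w, Y w))) ?A"
    by (simp only: emeasure_distr[OF measurable_Pair[OF X Y] A])
  also have "\<dots> = emeasure (distr M S X \<Otimes>\<^sub>M distr M T Y) ?A"
    using indep unfolding indep_var_distribution_eq by (simp only:)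
  also have "\<dots> = (\<integral>\<^sup>+y. emeasure (distr M S X) ((\<lambda>x. (x, y)) -` ?A) \<partial>distr M T Y)"
    using A sets_pair_measure_cong[of "distr M S X" S "distr M T Y" T]
    by (intro pair_sigma_finite.emeasure_pair_measure_alt2[OF XY]) simp
  also have "\<dots> = (\<integral>\<^sup>+y. emeasure (distr M S X) {x \<in> space S. P x y} \<partial>distr M T Y)"
    by (intro nn_integral_cong arg_cong2[where f=emeasure] refl) (auto simp: space_pair_measure)
  finally show ?thesis .
qed

lemma (in prob_space) prob_indep_erlang_affine_le:
  assumes indep: "indep_var borel X borel Y"
    and X: "distributed M lborel X (erlang_density k l)"
    and Y: "distributed M lborel Y (erlang_density k l)"
    and l: "0 < l" and "0 \<le> a" "0 \<le> b"
  shows "prob {w \<in> space M. a + b * Y w \<le> X w}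
           = exp (- l * a) * (\<Sum>n\<le>k. \<Sum>r\<le>n. real (n choose r) * (l * a) ^ r * b ^ (n - r) *
               fact (k + (n - r)) / (fact n * fact k * (1 + b) ^ (Suc k + (n - r))))"
    (is "_ = ?V")
proof -
  let ?D = "density lborel (erlang_density k l)"
  let ?F = "\<lambda>y. 1 - erlang_CDF k l (a + b * y)"
  have distr_eq: "distr M borel Z = ?D" if "distributed M lborel Z (erlang_density k l)" for Z
  proof -
    have "distr M borel Z = distr M lborel Z"
      by (rule distr_cong) simp_all
    then show ?thesis
      using that by (simp add: distributed_distr_eq_density)
  qed
  have F: "has_bochner_integral ?D ?F ?V"
    using has_bochner_integral_erlang_tail_affine assms by blast
  have F_nonneg: "0 \<le> ?F y" for y
    using l erlang_CDF_le_1[of l] by simp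
  have "emeasure M {w \<in> space M. a + b * Y w \<le> X w}
      = (\<integral>\<^sup>+y. emeasure ?D {x \<in> space borel. a + b * y \<le> x} \<partial>?D)"
    using emeasure_indep_var_pair[OF indep, of "\<lambda>x y. a + b * y \<le> x"]
    by (simp add: distr_eq X Y)
  also have "\<dots> = (\<integral>\<^sup>+y. ennreal (?F y) \<partial>?D)"
    using l by (simp add: atLeast_def emeasure_erlang_density_atLeast[symmetric])
  also have "\<dots> = ennreal ?V"
    using F F_nonneg by (simp add: has_bochner_integral_iff nn_integral_eq_integral)
  finally have "emeasure M {w \<in> space M. a + b * Y w \<le> X w} = ennreal ?V" .
  moreover have "0 \<le> ?V"
    unfolding has_bochner_integral_integral_eq[OF F, symmetric]
    by (intro Bochner_Integration.integral_nonneg F_nonneg)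
  ultimately show ?thesis
    by (simp add: emeasure_eq_measure)
qed

lemma (in prob_space) prob_sinr_less_indep_erlang:
  assumes indep: "indep_var borel X borel Y"
    and X: "distributed M lborel X (erlang_density k l)"
    and Y: "distributed M lborel Y (erlang_density k l)"
    and l: "0 < l" and g: "0 < g" and d: "0 \<le> d" and c: "0 < c" and t: "0 \<le> t"
  shows "prob {w \<in> space M. g * X w / (d * Y w + c) < t}
           = 1 - exp (- l * (t / g * c)) *
               (\<Sum>n\<le>k. \<Sum>r\<le>n. real (n choose r) * (l * (t / g * c)) ^ r * (t / g * d) ^ (n - r) *
                  fact (k + (n - r)) / (fact n * fact k * (1 + t / g * d) ^ (Suc k + (n - r))))"
    (is "_ = 1 - ?V")
proof -
  let ?E = "{w \<in> space M. t / g * c + t / g * d * Y w \<le> X w}"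
  have [measurable]: "X \<in> borel_measurable M" "Y \<in> borel_measurable M"
    using X Y by (simp_all add: distributed_def)
  have threshold: "g * x / (d * y + c) < t \<longleftrightarrow> \<not> t / g * c + t / g * d * y \<le> x"
    if "0 \<le> y" for x y
  proof -
    have "0 < d * y + c"
      using that d c by (simp add: add_nonneg_pos)
    then have "g * x / (d * y + c) < t \<longleftrightarrow> x < t * (d * y + c) / g"
      using g by (simp add: pos_divide_less_eq pos_less_divide_eq ac_simps)
    then show ?thesis
      by (simp add: not_le add_divide_distrib algebra_simps)
  qed
  have "AE w in M. 0 \<le> Y w"
    using Y by (subst distributed_AE2) (auto simp: erlang_density_def)
  then have "AE w in M.
      w \<in> {w \<in> space M. g * X w / (d * Y w + c) < t} \<longleftrightarrow> w \<in> space M - ?E"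
    using AE_space by eventually_elim (simp add: threshold)
  then have "prob {w \<in> space M. g * X w / (d * Y w + c) < t} = prob (space M - ?E)"
    by (rule measure_eq_AE) measurable
  also have "\<dots> = 1 - prob ?E"
    by (intro prob_compl) measurable
  also have "prob ?E = ?V"
    using assms by (intro prob_indep_erlang_affine_le) auto
  finally show ?thesis .
qed

lemma Gamma_real_nat_eq_fact: "0 < n \<Longrightarrow> Gamma (real n) = fact (n - 1)"
  using Gamma_fact[of "n - 1", where 'a = real] by simp

lemma nakagami_power_pdf_eq_erlang_density:
  assumes "0 < m" "x \<noteq> 0"
  shows "nakagami_power_pdf m x = erlang_density (m - 1) (real m) x"
proof -
  have "real m ^ m = real m ^ Suc (m - 1)"
    using assms by simp
  then show ?thesis
    using assms by (auto simp: nakagami_power_pdf_def erlang_density_def Gamma_real_nat_eq_fact)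
qed

lemma distributed_nakagami_power_iff_erlang:
  assumes "0 < m"
  shows "distributed M lborel X (\<lambda>x. ennreal (nakagami_power_pdf m x))
           \<longleftrightarrow> distributed M lborel X (erlang_density (m - 1) (real m))"
proof (rule distributed_cong_density)
  show "AE x in lborel. ennreal (nakagami_power_pdf m x) = ennreal (erlang_density (m - 1) (real m) x)"
    using AE_lborel_singleton[of 0]
    by eventually_elim (simp add: nakagami_power_pdf_eq_erlang_density assms)
qed (simp_all add: nakagami_power_pdf_def)

lemma outage_series_eq:
  fixes m :: nat and t P A B :: real
  assumes m: "0 < m" and P: "0 < P" and b: "0 \<le> t / P * B"
  shows "(\<Sum>n\<le>m - 1. \<Sum>r\<le>n. real (n choose r) * (real m * (t / P * A)) ^ r * (t / P * B) ^ (n - r) *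
           fact (m - 1 + (n - r)) / (fact n * fact (m - 1) * (1 + t / P * B) ^ (Suc (m - 1) + (n - r))))
         = (\<Sum>n = 0..m - 1. \<Sum>r = 0..n. real m ^ r * t ^ n * real (n choose r) * B ^ (n - r) /
             (fact (m - 1) * fact n) * (A ^ r / P ^ n) * Gamma (real (m + n - r)) *
             (t / P * B + 1) powr (- real (m + n - r)))"
  unfolding atLeast0AtMost
proof (intro sum.cong refl)
  fix n r :: nat
  assume "n \<in> {..m - 1}" "r \<in> {..n}"
  then have r: "r \<le> n"
    by simp
  define q where "q = t / P * B + 1"
  have q: "0 < q"
    using b by (simp add: q_def)
  have N: "m + n - r = Suc (m - 1) + (n - r)"
    using m r by simp
  have "(real m * (t / P * A)) ^ r * (t / P * B) ^ (n - r) = real m ^ r * t ^ n * A ^ r * B ^ (n - r) / P ^ n"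
  proof -
    have "t ^ n = t ^ r * t ^ (n - r)" "P ^ n = P ^ r * P ^ (n - r)"
      using r by (simp_all flip: power_add)
    then show ?thesis
      by (simp add: power_mult_distrib power_divide)
  qed
  moreover have "Gamma (real (m + n - r)) = fact (m + n - r - 1)"
    using m r by (intro Gamma_real_nat_eq_fact) simp
  moreover have "m + n - r - 1 = m - 1 + (n - r)"
    using m r by simp
  moreover have "q powr (- real (m + n - r)) = 1 / q ^ (Suc (m - 1) + (n - r))"
    using q N by (simp only: powr_minus_divide powr_realpow)
  moreover have "1 + t / P * B = q"
    by (simp add: q_def)
  ultimately show "real (n choose r) * (real m * (t / P * A)) ^ r * (t / P * B) ^ (n - r) *
      fact (m - 1 + (n - r)) / (fact n * fact (m - 1) * (1 + t / P * B) ^ (Suc (m - 1) + (n - r)))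
    = real m ^ r * t ^ n * real (n choose r) * B ^ (n - r) / (fact (m - 1) * fact n) *
      (A ^ r / P ^ n) * Gamma (real (m + n - r)) * (t / P * B + 1) powr (- real (m + n - r))"
    using m r P b q unfolding q_def[symmetric] by (simp add: field_simps)
qed

theorem theorem1:
  fixes M :: "'w measure"
    and X Y :: "'w \<Rightarrow> real"   (* X = |h_c|^2, Y = |h_r|^2 *)
    and m :: nat
    and P_c P_r P_BS C_c C_r d_c d_r alpha_c alpha_r beta_semi B sigma_tau_sq sigma_sq gamma_th :: real
  assumes "prob_space M"
    and "m > 0"
    and "distributed M lborel X (\<lambda>x. ennreal (nakagami_power_pdf m x))"
    and "distributed M lborel Y (\<lambda>x. ennreal (nakagami_power_pdf m x))"
    and "prob_space.indep_var M borel X borel Y"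
    and "P_c > 0" "P_r > 0" "P_BS > 0" "C_c > 0" "C_r > 0" "d_c > 0" "d_r > 0"
        "alpha_c > 0" "alpha_r > 0" "beta_semi > 0" "B > 0" "sigma_tau_sq > 0"
        "sigma_sq > 0" "gamma_th > 0"
  shows
    "let Ib = I_bar P_BS C_r d_r alpha_r beta_semi B sigma_tau_sq;
         gamma_cI = (\<lambda>w. P_c * C_c * d_c powr (- alpha_c) * X w /
                         (P_r * C_c * d_r powr (- alpha_c) * Y w + Ib + sigma_sq));
         a1 = P_BS * C_r * d_r powr (- alpha_r) * gamma_sq * beta_semi\<^sup>2 * B\<^sup>2 * sigma_tau_sq
                / (C_c * d_c powr (- alpha_c));
         a2 = sigma_sq / (C_c * d_c powr (- alpha_c));
         a3 = d_r powr (- alpha_c) / d_c powr (- alpha_c)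
     in measure M {w \<in> space M. gamma_cI w < gamma_th} =
        1 - exp (- (real m * gamma_th / P_c) * (a1 + a2)) *
          (\<Sum>p = 0..m - 1. \<Sum>r = 0..p.
             (real m ^ r * gamma_th ^ p * real (p choose r) * (P_r * a3) ^ (p - r))
               / (fact (m - 1) * fact p)
             * ((a1 + a2) ^ r / P_c ^ p)
             * Gamma (real (m + p - r))
             * (gamma_th * a3 * P_r / P_c + 1) powr (- real (m + p - r)))"
proof -
  interpret prob_space M
    by fact
  define g where "g = P_c * C_c * d_c powr (- alpha_c)"
  define d where "d = P_r * C_c * d_r powr (- alpha_c)"
  define c where "c = I_bar P_BS C_r d_r alpha_r beta_semi B sigma_tau_sq + sigma_sq"
  define A where "A = P_BS * C_r * d_r powr (- alpha_r) * gamma_sq * beta_semi\<^sup>2 * B\<^sup>2 * sigma_tau_sq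
                        / (C_c * d_c powr (- alpha_c)) + sigma_sq / (C_c * d_c powr (- alpha_c))"
  define a3 where "a3 = d_r powr (- alpha_c) / d_c powr (- alpha_c)"
  have X: "distributed M lborel X (erlang_density (m - 1) (real m))"
    and Y: "distributed M lborel Y (erlang_density (m - 1) (real m))"
    using assms(2-4) distributed_nakagami_power_iff_erlang by blast+
  have pos: "0 < real m" "0 < g" "0 \<le> d" "0 < c" "0 \<le> gamma_th"
    using assms by (simp_all add: g_def d_def c_def I_bar_def gamma_sq_def add_nonneg_pos)
  have "0 \<le> gamma_th / P_c * (P_r * a3)"
    using assms by (simp add: a3_def)
  moreover have "gamma_th / g * c = gamma_th / P_c * A" "gamma_th / g * d = gamma_th / P_c * (P_r * a3)"
    using assms by (simp_all add: g_def c_def d_def A_def a3_def I_bar_def field_simps)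
  moreover have "- real m * (gamma_th / P_c * A) = - (real m * gamma_th / P_c) * A"
    "gamma_th * a3 * P_r / P_c = gamma_th / P_c * (P_r * a3)"
    by simp_all
  ultimately show ?thesis
    \<comment> \<open>\<open>add.assoc\<close> regroups the denominator so that \<open>c\<close> can be folded\<close>
    using prob_sinr_less_indep_erlang[OF assms(5) X Y pos] assms(2,6)
    unfolding Let_def g_def[symmetric] d_def[symmetric] add.assoc c_def[symmetric]
      A_def[symmetric] a3_def[symmetric] by (simp only: outage_series_eq)
qed

end
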